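(* The convex Vietoris functor $\mathbb{V}^{\mathrm{c}}\colon\mathbf{CompOrd}\to\mathbf{CompOrd}$ preserves regular monomorphisms; equivalently, if $f\colon X\to Y$ is an order-reflecting morphism of compact ordered spaces (i.e. $f(x)\le f(y)$ implies $x\le y$), then $\mathbb{V}^{\mathrm{c}}f$ is order-reflecting with respect to the Egli–Milner orders.
   Context: $\mathbf{CompOrd}$ is the category of compact ordered spaces (compact Hausdorff spaces with a partial order closed in $X\times X$) and continuous order-preserving maps; its regular monomorphisms are exactly the order-reflecting morphisms. For a subset $Y$ of a poset, $\uparrow Y$, $\downarrow Y$ are up- and down-closure; $Y$ is convex if $y_1\le x\le y_2$ with $y_1,y_2\in Y$ implies $x\in Y$; $\updownarrow Y=\uparrow Y\cap\downarrow Y$. $\mathbb{V}^{\mathrm{c}}X$ is the set of closed convex subsets of $X$ with the topology generated by $\Diamond U=\{K\mid K\cap U\neq\varnothing\}$ and $\Box U=\{K\mid K\subseteq U\}$ ($U$ open upset or open downset of $X$) and the Egli–Milner order $K\le_{\mathrm{EM}}L$ iff $\uparrow L\subseteq\uparrow K$ and $\downarrow K\subseteq\downarrow L$; $\mathbb{V}^{\mathrm{c}}f(K)=\updownarrow f[K]$. *)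

theory Defs
  imports "HOL-Analysis.Analysis"
begin

definition compord :: "'a topology \<Rightarrow> ('a \<Rightarrow> 'a \<Rightarrow> bool) \<Rightarrow> bool" where
  "compord X le \<longleftrightarrow>
     compact_space X \<and> Hausdorff_space X \<and>
     (\<forall>x\<in>topspace X. le x x) \<and>
     (\<forall>x\<in>topspace X. \<forall>y\<in>topspace X. le x y \<and> le y x \<longrightarrow> x = y) \<and>
     (\<forall>x\<in>topspace X. \<forall>y\<in>topspace X. \<forall>z\<in>topspace X. le x y \<and> le y z \<longrightarrow> le x z) \<and>
     closedin (prod_topology X X) {(x, y). x \<in> topspace X \<and> y \<in> topspace X \<and> le x y}"

definition compord_morphism ::
  "'a topology \<Rightarrow> ('a \<Rightarrow> 'a \<Rightarrow> bool) \<Rightarrow> 'b topology \<Rightarrow> ('b \<Rightarrow> 'b \<Rightarrow> bool) \<Rightarrow> ('a \<Rightarrow> 'b) \<Rightarrow> bool" where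
  "compord_morphism X le Y le' f \<longleftrightarrow>
     continuous_map X Y f \<and>
     (\<forall>x\<in>topspace X. \<forall>y\<in>topspace X. le x y \<longrightarrow> le' (f x) (f y))"

definition order_reflecting ::
  "'a set \<Rightarrow> ('a \<Rightarrow> 'a \<Rightarrow> bool) \<Rightarrow> ('b \<Rightarrow> 'b \<Rightarrow> bool) \<Rightarrow> ('a \<Rightarrow> 'b) \<Rightarrow> bool" where
  "order_reflecting S le le' f \<longleftrightarrow> (\<forall>x\<in>S. \<forall>y\<in>S. le' (f x) (f y) \<longrightarrow> le x y)"

definition upset :: "'a set \<Rightarrow> ('a \<Rightarrow> 'a \<Rightarrow> bool) \<Rightarrow> 'a set \<Rightarrow> 'a set" where
  "upset S le A = {x\<in>S. \<exists>a\<in>A. le a x}"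

definition downset :: "'a set \<Rightarrow> ('a \<Rightarrow> 'a \<Rightarrow> bool) \<Rightarrow> 'a set \<Rightarrow> 'a set" where
  "downset S le A = {x\<in>S. \<exists>a\<in>A. le x a}"

definition updownset :: "'a set \<Rightarrow> ('a \<Rightarrow> 'a \<Rightarrow> bool) \<Rightarrow> 'a set \<Rightarrow> 'a set" where
  "updownset S le A = upset S le A \<inter> downset S le A"

definition order_convex :: "'a set \<Rightarrow> ('a \<Rightarrow> 'a \<Rightarrow> bool) \<Rightarrow> 'a set \<Rightarrow> bool" where
  "order_convex S le A \<longleftrightarrow>
     (\<forall>y1\<in>A. \<forall>y2\<in>A. \<forall>x\<in>S. le y1 x \<and> le x y2 \<longrightarrow> x \<in> A)"

definition Vc_carrier :: "'a topology \<Rightarrow> ('a \<Rightarrow> 'a \<Rightarrow> bool) \<Rightarrow> 'a set set" where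
  "Vc_carrier X le = {K. closedin X K \<and> order_convex (topspace X) le K}"

definition EM_le :: "'a set \<Rightarrow> ('a \<Rightarrow> 'a \<Rightarrow> bool) \<Rightarrow> 'a set \<Rightarrow> 'a set \<Rightarrow> bool" where
  "EM_le S le K L \<longleftrightarrow> upset S le L \<subseteq> upset S le K \<and> downset S le K \<subseteq> downset S le L"

definition Vc_map :: "'b topology \<Rightarrow> ('b \<Rightarrow> 'b \<Rightarrow> bool) \<Rightarrow> ('a \<Rightarrow> 'b) \<Rightarrow> 'a set \<Rightarrow> 'b set" where
  "Vc_map Y le' f K = updownset (topspace Y) le' (f ` K)"

end

theory Submission
  imports Defs
begin

text \<open>Only order theory is involved. Up- and down-closures do not see the convex hull
  (\<open>upset (updownset A) = upset A\<close>, dually for downsets), so the Egli--Milner inequality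
  between \<open>Vc_map f K\<close> and \<open>Vc_map f L\<close> is the same as between the images \<open>f ` K\<close> and
  \<open>f ` L\<close>. For an order-embedding f, the preimage of \<open>upset (f ` A)\<close> is \<open>upset A\<close>
  (dually for downsets), and pulling the two inclusions back along f gives \<open>K \<le>\<^sub>E\<^sub>M L\<close>.\<close>

lemma upset_updownset:
  assumes "\<And>x. x \<in> T \<Longrightarrow> le x x"
    and "\<And>x y z. \<lbrakk>x \<in> T; y \<in> T; z \<in> T; le x y; le y z\<rbrakk> \<Longrightarrow> le x z"
    and "A \<subseteq> T"
  shows "upset T le (updownset T le A) = upset T le A"
  using assms unfolding updownset_def upset_def downset_def by blast

lemma downset_updownset:
  assumes "\<And>x. x \<in> T \<Longrightarrow> le x x"
    and "\<And>x y z. \<lbrakk>x \<in> T; y \<in> T; z \<in> T; le x y; le y z\<rbrakk> \<Longrightarrow> le x z"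
    and "A \<subseteq> T"
  shows "downset T le (updownset T le A) = downset T le A"
  using assms unfolding updownset_def upset_def downset_def by blast

lemma EM_le_updownset_iff:
  assumes "\<And>x. x \<in> T \<Longrightarrow> le x x"
    and "\<And>x y z. \<lbrakk>x \<in> T; y \<in> T; z \<in> T; le x y; le y z\<rbrakk> \<Longrightarrow> le x z"
    and "A \<subseteq> T" and "B \<subseteq> T"
  shows "EM_le T le (updownset T le A) (updownset T le B) \<longleftrightarrow> EM_le T le A B"
  using assms by (simp add: EM_le_def upset_updownset downset_updownset)

lemma vimage_upset_image:
  assumes "f ` S \<subseteq> T"
    and "\<And>x y. \<lbrakk>x \<in> S; y \<in> S; le x y\<rbrakk> \<Longrightarrow> le' (f x) (f y)"
    and "order_reflecting S le le' f"
    and "A \<subseteq> S"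
  shows "S \<inter> f -` upset T le' (f ` A) = upset S le A"
  using assms unfolding order_reflecting_def upset_def by blast

lemma vimage_downset_image:
  assumes "f ` S \<subseteq> T"
    and "\<And>x y. \<lbrakk>x \<in> S; y \<in> S; le x y\<rbrakk> \<Longrightarrow> le' (f x) (f y)"
    and "order_reflecting S le le' f"
    and "A \<subseteq> S"
  shows "S \<inter> f -` downset T le' (f ` A) = downset S le A"
  using assms unfolding order_reflecting_def downset_def by blast

lemma EM_le_image_reflect:
  assumes "f ` S \<subseteq> T"
    and "\<And>x y. \<lbrakk>x \<in> S; y \<in> S; le x y\<rbrakk> \<Longrightarrow> le' (f x) (f y)"
    and "order_reflecting S le le' f"
    and "K \<subseteq> S" and "L \<subseteq> S"
    and "EM_le T le' (f ` K) (f ` L)"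
  shows "EM_le S le K L"
proof -
  have "upset S le L = S \<inter> f -` upset T le' (f ` L)"
    using vimage_upset_image[OF assms(1-3,5)] by simp
  also have "\<dots> \<subseteq> S \<inter> f -` upset T le' (f ` K)"
    using assms(6) unfolding EM_le_def by auto
  also have "\<dots> = upset S le K"
    using vimage_upset_image[OF assms(1-4)] .
  finally have up: "upset S le L \<subseteq> upset S le K" .
  have "downset S le K = S \<inter> f -` downset T le' (f ` K)"
    using vimage_downset_image[OF assms(1-4)] by simp
  also have "\<dots> \<subseteq> S \<inter> f -` downset T le' (f ` L)"
    using assms(6) unfolding EM_le_def by auto
  also have "\<dots> = downset S le L"
    using vimage_downset_image[OF assms(1-3,5)] .
  finally show ?thesis
    using up unfolding EM_le_def by blast
qed

theorem lemma3p18: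
  fixes X :: "'a topology" and Y :: "'b topology"
    and le :: "'a \<Rightarrow> 'a \<Rightarrow> bool" and le' :: "'b \<Rightarrow> 'b \<Rightarrow> bool" and f :: "'a \<Rightarrow> 'b"
  assumes "compord X le" and "compord Y le'"
    and "compord_morphism X le Y le' f"
    and "order_reflecting (topspace X) le le' f"
  shows "order_reflecting (Vc_carrier X le) (EM_le (topspace X) le) (EM_le (topspace Y) le')
           (Vc_map Y le' f)"
  unfolding order_reflecting_def
proof (intro ballI impI)
  fix K L
  assume "K \<in> Vc_carrier X le" "L \<in> Vc_carrier X le"
    and EM: "EM_le (topspace Y) le' (Vc_map Y le' f K) (Vc_map Y le' f L)"
  then have K: "K \<subseteq> topspace X" and L: "L \<subseteq> topspace X"
    unfolding Vc_carrier_def by (auto dest: closedin_subset)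
  have maps: "f ` topspace X \<subseteq> topspace Y"
    and mono: "\<And>x y. \<lbrakk>x \<in> topspace X; y \<in> topspace X; le x y\<rbrakk> \<Longrightarrow> le' (f x) (f y)"
    using assms(3) unfolding compord_morphism_def by (auto simp: continuous_map_def)
  have refl: "\<And>y. y \<in> topspace Y \<Longrightarrow> le' y y"
    and trans: "\<And>x y z. \<lbrakk>x \<in> topspace Y; y \<in> topspace Y; z \<in> topspace Y; le' x y; le' y z\<rbrakk>
      \<Longrightarrow> le' x z"
    using assms(2) unfolding compord_def by blast+
  have "f ` K \<subseteq> topspace Y" "f ` L \<subseteq> topspace Y"
    using maps K L by blast+
  with EM have "EM_le (topspace Y) le' (f ` K) (f ` L)"
    unfolding Vc_map_def using EM_le_updownset_iff[of "topspace Y" le', OF refl trans] by simp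
  then show "EM_le (topspace X) le K L"
    using EM_le_image_reflect[of f "topspace X" "topspace Y" le le', OF maps mono assms(4) K L]
    by blast
qed

end
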